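(* Let $V$ be a real Hilbert space, $\mathcal D$ a dictionary, $V_n\subset V$ a subspace of dimension $n$ with orthonormal basis $(\phi_1,\dots,\phi_n)$, and $\kappa\in(0,1)$. Let $(W_m)_{m\ge0}$ be generated by the collective OMP algorithm with parameter $\kappa$. If $J(V_n)<\infty$, then $$r_m\le\frac{J(V_n)^2}{\kappa^2}(m+1)^{-1}\qquad\text{for all } m\ge0.$$
   Context: A dictionary is a set $\mathcal D\subset V$ of elements with $\|\omega\|=1$ for all $\omega\in\mathcal D$ whose finite linear combinations are dense in $V$. Collective OMP: $W_0=\{0\}$; for $k\ge1$, choose $\omega_k\in\mathcal D$ with $$\sum_{i=1}^n|\langle\phi_i-P_{W_{k-1}}\phi_i,\omega_k\rangle|^2\ge\kappa^2\sup_{\omega\in\mathcal D}\sum_{i=1}^n|\langle\phi_i-P_{W_{k-1}}\phi_i,\omega\rangle|^2,$$ and set $W_k=\operatorname{span}\{\omega_1,\dots,\omega_k\}$ ($P_X$ is the orthogonal projection onto $X$). The residual is $r_m=\sum_{i=1}^n\|\phi_i-P_{W_m}\phi_i\|^2$. For $\Psi=(\psi_1,\dots,\psi_n)\in V^n$, $\|\Psi\|_{\ell^1(\mathcal D)}=\inf\{\sum_{\omega\in\mathcal D}\|c_\omega\|_2:\psi_i=\sum_{\omega\in\mathcal D}c_{\omega,i}\,\omega,\ i=1,\dots,n\}$ with $c_\omega\in\mathbb R^n$ (countably many nonzero; infimum of the empty set is $+\infty$), and $J(V_n)=\|(\phi_1,\dots,\phi_n)\|_{\ell^1(\mathcal D)}$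 for an orthonormal basis of $V_n$ (independent of the choice of basis). *)

theory Defs
  imports "HOL-Analysis.Analysis"
begin

definition dictionary :: "'a::real_normed_vector set \<Rightarrow> bool" where
  "dictionary D \<longleftrightarrow> (\<forall>\<omega>\<in>D. norm \<omega> = 1) \<and> closure (span D) = UNIV"

text \<open>Orthogonal projection onto a (finite-dimensional, hence closed) subspace X:
  the unique y in X with x - y orthogonal to X.\<close>
definition proj_onto :: "'a::real_inner set \<Rightarrow> 'a \<Rightarrow> 'a" where
  "proj_onto X x = (THE y. y \<in> X \<and> (\<forall>w\<in>X. inner (x - y) w = 0))"

definition omp_space :: "(nat \<Rightarrow> 'a::real_vector) \<Rightarrow> nat \<Rightarrow> 'a set" where
  "omp_space \<omega> k = span (\<omega> ` {1..k})"

definition collective_omp ::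
  "'a::real_inner set \<Rightarrow> real \<Rightarrow> nat \<Rightarrow> (nat \<Rightarrow> 'a) \<Rightarrow> (nat \<Rightarrow> 'a) \<Rightarrow> bool" where
  "collective_omp D \<kappa> n \<phi> \<omega> \<longleftrightarrow>
     (\<forall>k\<ge>1. \<omega> k \<in> D \<and>
        (\<Sum>i<n. (inner (\<phi> i - proj_onto (omp_space \<omega> (k - 1)) (\<phi> i)) (\<omega> k))\<^sup>2)
        \<ge> \<kappa>\<^sup>2 * (SUP v\<in>D. (\<Sum>i<n. (inner (\<phi> i - proj_onto (omp_space \<omega> (k - 1)) (\<phi> i)) v)\<^sup>2)))"

definition omp_residual :: "(nat \<Rightarrow> 'a::real_inner) \<Rightarrow> nat \<Rightarrow> (nat \<Rightarrow> 'a) \<Rightarrow> nat \<Rightarrow> real" where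
  "omp_residual \<phi> n \<omega> m = (\<Sum>i<n. (norm (\<phi> i - proj_onto (omp_space \<omega> m) (\<phi> i)))\<^sup>2)"

text \<open>Valid coefficient families c (c w i is the i-th coordinate of c_w in R^n) representing
  psi 0, ..., psi (n-1): countably many nonzero, and psi i = sum over w in D of c w i *R w.\<close>
definition l1_rep :: "'a::real_normed_vector set \<Rightarrow> nat \<Rightarrow> (nat \<Rightarrow> 'a) \<Rightarrow> ('a \<Rightarrow> nat \<Rightarrow> real) \<Rightarrow> bool" where
  "l1_rep D n \<psi> c \<longleftrightarrow> countable {w\<in>D. \<exists>i<n. c w i \<noteq> 0} \<and>
     (\<forall>i<n. ((\<lambda>w. c w i *\<^sub>R w) has_sum \<psi> i) D)"

definition l1_cost :: "'a set \<Rightarrow> nat \<Rightarrow> ('a \<Rightarrow> nat \<Rightarrow> real) \<Rightarrow> ereal" where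
  "l1_cost D n c = (SUP F\<in>{F. finite F \<and> F \<subseteq> D}. ereal (\<Sum>w\<in>F. sqrt (\<Sum>i<n. (c w i)\<^sup>2)))"

text \<open>The l1(D) norm of (psi 0, ..., psi (n-1)); infimum of empty set is +infinity.\<close>
definition l1_dict_norm :: "'a::real_normed_vector set \<Rightarrow> nat \<Rightarrow> (nat \<Rightarrow> 'a) \<Rightarrow> ereal" where
  "l1_dict_norm D n \<psi> = (INF c\<in>{c. l1_rep D n \<psi> c}. l1_cost D n c)"

end

theory Submission
  imports Defs
begin

text \<open>Let \<open>e m i = \<phi> i - P\<^bsub>W m\<^esub> (\<phi> i)\<close> and let \<open>s m\<close> be the largest collective
  correlation \<open>sup\<^bsub>v \<in> D\<^esub> \<Sum>\<^sub>i \<langle>e m i, v\<rangle>\<^sup>2\<close>. Since \<open>e m i\<close> is orthogonal to \<open>W m\<close>, the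
  residual is \<open>r m = \<Sum>\<^sub>i \<langle>e m i, \<phi> i\<rangle>\<close>; expanding \<open>\<phi> i = \<Sum>\<^sub>v c v i \<cdot> v\<close> and applying
  Cauchy-Schwarz in \<open>\<real>\<^sup>n\<close> to each \<open>v\<close> gives \<open>r m \<le> J \<cdot> sqrt (s m)\<close>. Enlarging \<open>W m\<close> by
  \<open>\<omega> (m+1)\<close> removes at least the component of each \<open>e m i\<close> along \<open>\<omega> (m+1)\<close>, so the
  selection rule yields \<open>r (m+1) \<le> r m - \<kappa>\<^sup>2 s m \<le> r m - r m\<^sup>2 / A\<close> with \<open>A = J\<^sup>2/\<kappa>\<^sup>2\<close>,
  and this recursion forces \<open>r m \<le> A/(m+1)\<close>.\<close>

lemma orthogonal_decomposition_span:
  fixes S :: "'a::real_inner set"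
  assumes "finite S"
  shows "\<exists>y\<in>span S. \<forall>w\<in>span S. inner (x - y) w = 0"
  using assms
proof (induction arbitrary: x rule: finite_induct)
  case empty
  then show ?case by simp
next
  case (insert a S)
  obtain y where y: "y \<in> span S" and y_orth: "\<forall>w\<in>span S. inner (x - y) w = 0"
    using insert.IH by blast
  obtain ya where ya: "ya \<in> span S" and ya_orth: "\<forall>w\<in>span S. inner (a - ya) w = 0"
    using insert.IH by blast
  \<comment> \<open>Gram-Schmidt step: \<open>za\<close> is the part of \<open>a\<close> orthogonal to \<open>span S\<close>; correct \<open>y\<close> along it.\<close>
  define za where "za = a - ya"
  define t where "t = inner (x - y) za / inner za za"
  have za_span: "za \<in> span (insert a S)"
    unfolding za_def using ya by (meson span_base span_diff insertI1 span_mono subset_insertI subsetD)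
  have orth_S: "\<forall>w\<in>span S. inner (x - (y + t *\<^sub>R za)) w = 0"
    using y_orth ya_orth by (simp add: za_def algebra_simps inner_diff_left)
  have "inner (x - (y + t *\<^sub>R za)) za = inner (x - y) za - t * inner za za"
    by (simp add: inner_diff_left inner_add_left)
  also have "\<dots> = 0"
    by (cases "za = 0") (simp_all add: t_def)
  finally have "inner (x - (y + t *\<^sub>R za)) za = 0" .
  then have orth_a: "inner (x - (y + t *\<^sub>R za)) a = 0"
    using orth_S ya by (simp add: za_def inner_diff_right)
  have "\<forall>w\<in>span (insert a S). inner (x - (y + t *\<^sub>R za)) w = 0"
  proof
    fix w assume "w \<in> span (insert a S)"
    then obtain k where "w - k *\<^sub>R a \<in> span S"
      by (auto simp: span_insert)
    then have "inner (x - (y + t *\<^sub>R za)) (w - k *\<^sub>R a) = 0"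
      using orth_S by blast
    then show "inner (x - (y + t *\<^sub>R za)) w = 0"
      using orth_a by (simp add: inner_diff_right)
  qed
  moreover have "y + t *\<^sub>R za \<in> span (insert a S)"
    using y za_span by (meson span_add span_mul span_mono subset_insertI subsetD)
  ultimately show ?case by blast
qed

lemma proj_onto_span:
  fixes S :: "'a::real_inner set"
  assumes "finite S"
  shows "proj_onto (span S) x \<in> span S"
    and "\<forall>w\<in>span S. inner (x - proj_onto (span S) x) w = 0"
proof -
  have "\<exists>!y. y \<in> span S \<and> (\<forall>w\<in>span S. inner (x - y) w = 0)"
  proof (rule ex_ex1I)
    show "\<exists>y. y \<in> span S \<and> (\<forall>w\<in>span S. inner (x - y) w = 0)"
      using orthogonal_decomposition_span[OF assms] by blast
  next
    fix y y'
    assume y: "y \<in> span S \<and> (\<forall>w\<in>span S. inner (x - y) w = 0)"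
      and y': "y' \<in> span S \<and> (\<forall>w\<in>span S. inner (x - y') w = 0)"
    then have "y' - y \<in> span S" by (simp add: span_diff)
    then have "inner (x - y) (y' - y) - inner (x - y') (y' - y) = 0"
      using y y' by simp
    then have "inner (y' - y) (y' - y) = 0"
      by (simp add: inner_diff_left inner_diff_right algebra_simps)
    then show "y = y'" by simp
  qed
  from theI'[OF this] show "proj_onto (span S) x \<in> span S"
    and "\<forall>w\<in>span S. inner (x - proj_onto (span S) x) w = 0"
    unfolding proj_onto_def by blast+
qed

lemma proj_onto_span_min_dist:
  fixes S :: "'a::real_inner set"
  assumes "finite S" "y \<in> span S"
  shows "(norm (x - proj_onto (span S) x))\<^sup>2 \<le> (norm (x - y))\<^sup>2"
proof -
  let ?p = "proj_onto (span S) x"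
  have "?p - y \<in> span S"
    using proj_onto_span(1)[OF assms(1)] assms(2) by (simp add: span_diff)
  then have "orthogonal (x - ?p) (?p - y)"
    using proj_onto_span(2)[OF assms(1)] by (simp add: orthogonal_def)
  then have "(norm ((x - ?p) + (?p - y)))\<^sup>2 = (norm (x - ?p))\<^sup>2 + (norm (?p - y))\<^sup>2"
    by (rule norm_add_Pythagorean)
  then show ?thesis by simp
qed

lemma power2_norm_sub_proj_onto_span:
  fixes S :: "'a::real_inner set"
  assumes "finite S"
  shows "(norm (x - proj_onto (span S) x))\<^sup>2 = inner (x - proj_onto (span S) x) x"
proof -
  let ?p = "proj_onto (span S) x"
  have "(norm (x - ?p))\<^sup>2 = inner (x - ?p) x - inner (x - ?p) ?p"
    by (simp add: power2_norm_eq_inner inner_diff_right)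
  then show ?thesis
    using proj_onto_span[OF assms] by simp
qed

lemma proj_onto_span_insert_dist:
  fixes S :: "'a::real_inner set"
  assumes "finite S" "norm w = 1"
  shows "(norm (x - proj_onto (span (insert w S)) x))\<^sup>2
           \<le> (norm (x - proj_onto (span S) x))\<^sup>2 - (inner (x - proj_onto (span S) x) w)\<^sup>2"
proof -
  define r where "r = x - proj_onto (span S) x"
  have "proj_onto (span S) x + inner r w *\<^sub>R w \<in> span (insert w S)"
    using proj_onto_span(1)[OF assms(1)]
    by (meson span_add span_mul span_base insertI1 span_mono subset_insertI subsetD)
  then have "(norm (x - proj_onto (span (insert w S)) x))\<^sup>2
      \<le> (norm (x - (proj_onto (span S) x + inner r w *\<^sub>R w)))\<^sup>2"
    using assms(1) by (intro proj_onto_span_min_dist) simp_all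
  also have "x - (proj_onto (span S) x + inner r w *\<^sub>R w) = r - inner r w *\<^sub>R w"
    by (simp add: r_def)
  also have "(norm (r - inner r w *\<^sub>R w))\<^sup>2 = (norm r)\<^sup>2 - (inner r w)\<^sup>2"
  proof -
    have "inner w w = 1" using assms(2) by (simp add: power2_norm_eq_inner[symmetric])
    then have "inner (r - inner r w *\<^sub>R w) (r - inner r w *\<^sub>R w) = inner r r - (inner r w)\<^sup>2"
      by (simp add: inner_diff_left inner_diff_right inner_commute power2_eq_square)
    then show ?thesis by (simp add: power2_norm_eq_inner)
  qed
  finally show ?thesis by (simp add: r_def)
qed

lemma quadratic_recurrence_bound:
  fixes a :: "nat \<Rightarrow> real"
  assumes "A > 0" and nonneg: "\<And>m. a m \<ge> 0"
    and rec: "\<And>m. a (Suc m) \<le> a m - (a m)\<^sup>2 / A"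
  shows "a m \<le> A / (real m + 1)"
proof (induction m)
  case 0
  have "(a 0)\<^sup>2 / A \<le> a 0"
    using rec[of 0] nonneg[of 1] by simp
  then have "a 0 * a 0 \<le> A * a 0"
    using \<open>A > 0\<close> by (simp add: field_simps power2_eq_square)
  then show ?case
    using nonneg[of 0] \<open>A > 0\<close> by (cases "a 0 = 0") (auto intro: mult_right_le_imp_le)
next
  case (Suc m)
  have dec: "a (Suc m) \<le> a m"
    using rec[of m] \<open>A > 0\<close> by (smt (verit) divide_nonneg_pos zero_le_power2)
  show ?case
  proof (cases "a m \<le> A / (real m + 2)")
    case True
    then show ?thesis using dec by (simp add: add.commute)
  next
    case False
    have "1 - a m / A \<le> 1 - 1 / (real m + 2)"
      using False \<open>A > 0\<close> by (simp add: field_simps)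
    moreover have "0 \<le> 1 - a m / A"
    proof -
      have "A / (real m + 1) \<le> A" using \<open>A > 0\<close> by (simp add: field_simps)
      then show ?thesis using Suc.IH \<open>A > 0\<close> by simp
    qed
    ultimately have "a m * (1 - a m / A) \<le> A / (real m + 1) * (1 - 1 / (real m + 2))"
      using Suc.IH nonneg[of m] by (intro mult_mono) auto
    also have "\<dots> = A / (real (Suc m) + 1)"
    proof -
      have "1 - 1 / (real m + 2) = (real m + 1) / (real m + 2)" by (simp add: field_simps)
      then show ?thesis by (simp add: add.commute)
    qed
    moreover have "a m - (a m)\<^sup>2 / A = a m * (1 - a m / A)"
      using \<open>A > 0\<close> by (simp add: field_simps power2_eq_square)
    ultimately show ?thesis
      using rec[of m] by simp
  qed
qed

definition max_correlation :: "'a::real_inner set \<Rightarrow> nat \<Rightarrow> (nat \<Rightarrow> 'a) \<Rightarrow> real" where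
  "max_correlation D n r = (SUP v\<in>D. \<Sum>i<n. (inner (r i) v)\<^sup>2)"

lemma sum_inner_power2_le_sum_norm_power2:
  fixes r :: "nat \<Rightarrow> 'a::real_inner"
  assumes "norm v = 1"
  shows "(\<Sum>i<n. (inner (r i) v)\<^sup>2) \<le> (\<Sum>i<n. (norm (r i))\<^sup>2)"
proof (rule sum_mono)
  fix i
  have "(inner (r i) v)\<^sup>2 \<le> inner (r i) (r i) * inner v v"
    by (rule Cauchy_Schwarz_ineq)
  then show "(inner (r i) v)\<^sup>2 \<le> (norm (r i))\<^sup>2"
    using assms by (simp add: power2_norm_eq_inner[symmetric])
qed

lemma max_correlation_upper:
  assumes "\<forall>v\<in>D. norm v = 1" "v \<in> D"
  shows "(\<Sum>i<n. (inner (r i) v)\<^sup>2) \<le> max_correlation D n r"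
proof -
  have "bdd_above ((\<lambda>v. \<Sum>i<n. (inner (r i) v)\<^sup>2) ` D)"
  proof (rule bdd_aboveI2)
    fix v assume "v \<in> D"
    then show "(\<Sum>i<n. (inner (r i) v)\<^sup>2) \<le> (\<Sum>i<n. (norm (r i))\<^sup>2)"
      using assms(1) by (simp add: sum_inner_power2_le_sum_norm_power2)
  qed
  then show ?thesis
    unfolding max_correlation_def using assms(2) by (rule cSUP_upper2) simp
qed

lemma max_correlation_nonneg:
  assumes "\<forall>v\<in>D. norm v = 1" "D \<noteq> {}"
  shows "0 \<le> max_correlation D n r"
proof -
  obtain v where "v \<in> D" using assms(2) by blast
  have "0 \<le> (\<Sum>i<n. (inner (r i) v)\<^sup>2)" by (simp add: sum_nonneg)
  also have "\<dots> \<le> max_correlation D n r" by (rule max_correlation_upper[OF assms(1) \<open>v \<in> D\<close>])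
  finally show ?thesis .
qed

lemma l1_cost_nonneg: "0 \<le> l1_cost D n c"
proof -
  have "ereal (\<Sum>w\<in>{}. sqrt (\<Sum>i<n. (c w i)\<^sup>2)) \<le> l1_cost D n c"
    unfolding l1_cost_def by (rule SUP_upper) auto
  then show ?thesis by (simp add: zero_ereal_def)
qed

lemma l1_dict_norm_nonneg: "0 \<le> l1_dict_norm D n \<psi>"
  unfolding l1_dict_norm_def by (rule INF_greatest) (rule l1_cost_nonneg)

lemma sum_inner_le_l1_cost:
  fixes \<psi> r :: "nat \<Rightarrow> 'a::real_inner"
  assumes rep: "l1_rep D n \<psi> c" and cost: "l1_cost D n c = ereal C"
    and corr: "\<forall>v\<in>D. (\<Sum>i<n. (inner (r i) v)\<^sup>2) \<le> S" and "0 \<le> S"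
  shows "(\<Sum>i<n. inner (r i) (\<psi> i)) \<le> C * sqrt S"
proof -
  have "((\<lambda>w. c w i * inner (r i) w) has_sum inner (r i) (\<psi> i)) D" if "i < n" for i
    using has_sum_bounded_linear[OF bounded_linear_inner_right, of "\<lambda>w. c w i *\<^sub>R w"] rep that
    unfolding l1_rep_def by simp
  then have lim: "((\<lambda>F. \<Sum>i<n. \<Sum>w\<in>F. c w i * inner (r i) w)
      \<longlongrightarrow> (\<Sum>i<n. inner (r i) (\<psi> i))) (finite_subsets_at_top D)"
    by (intro tendsto_sum) (auto simp: has_sum_def)
  have "(\<Sum>i<n. \<Sum>w\<in>F. c w i * inner (r i) w) \<le> C * sqrt S" if F: "finite F" "F \<subseteq> D" for F
  proof -
    have "(\<Sum>i<n. \<Sum>w\<in>F. c w i * inner (r i) w) = (\<Sum>w\<in>F. \<Sum>i<n. c w i * inner (r i) w)"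
      by (rule sum.swap)
    also have "\<dots> \<le> (\<Sum>w\<in>F. L2_set (c w) {..<n} * sqrt S)"
    proof (rule sum_mono)
      fix w assume "w \<in> F"
      have "(\<Sum>i<n. c w i * inner (r i) w) \<le> (\<Sum>i<n. \<bar>c w i\<bar> * \<bar>inner (r i) w\<bar>)"
        by (intro sum_mono) (simp add: abs_mult[symmetric])
      also have "\<dots> \<le> L2_set (c w) {..<n} * L2_set (\<lambda>i. inner (r i) w) {..<n}"
        by (rule L2_set_mult_ineq)
      also have "\<dots> \<le> L2_set (c w) {..<n} * sqrt S"
        using corr \<open>w \<in> F\<close> F by (intro mult_left_mono) (auto simp: L2_set_def sum_nonneg)
      finally show "(\<Sum>i<n. c w i * inner (r i) w) \<le> L2_set (c w) {..<n} * sqrt S" .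
    qed
    also have "\<dots> = (\<Sum>w\<in>F. L2_set (c w) {..<n}) * sqrt S"
      by (simp add: sum_distrib_right)
    also have "\<dots> \<le> C * sqrt S"
    proof (rule mult_right_mono)
      have "ereal (\<Sum>w\<in>F. sqrt (\<Sum>i<n. (c w i)\<^sup>2)) \<le> l1_cost D n c"
        unfolding l1_cost_def using F by (intro SUP_upper) auto
      then show "(\<Sum>w\<in>F. L2_set (c w) {..<n}) \<le> C"
        using cost by (simp add: L2_set_def)
    qed (simp add: \<open>0 \<le> S\<close>)
    finally show ?thesis .
  qed
  then show ?thesis
    by (intro tendsto_upperbound[OF lim]) (auto intro!: eventually_finite_subsets_at_top_weakI)
qed

lemma sum_inner_le_l1_dict_norm:
  fixes \<psi> r :: "nat \<Rightarrow> 'a::real_inner"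
  assumes finite: "l1_dict_norm D n \<psi> < \<infinity>"
    and corr: "\<forall>v\<in>D. (\<Sum>i<n. (inner (r i) v)\<^sup>2) \<le> S" and "0 \<le> S"
  shows "(\<Sum>i<n. inner (r i) (\<psi> i)) \<le> real_of_ereal (l1_dict_norm D n \<psi>) * sqrt S"
proof -
  obtain J where J: "l1_dict_norm D n \<psi> = ereal J"
    using finite l1_dict_norm_nonneg[of D n \<psi>] by (cases "l1_dict_norm D n \<psi>") auto
  have above: "(\<Sum>i<n. inner (r i) (\<psi> i)) \<le> B * sqrt S" if "J < B" for B
  proof -
    have "(INF c\<in>{c. l1_rep D n \<psi> c}. l1_cost D n c) < ereal B"
      using \<open>J < B\<close> J by (simp add: l1_dict_norm_def)
    then obtain c where rep: "l1_rep D n \<psi> c" and "l1_cost D n c < ereal B"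
      by (auto simp: INF_less_iff)
    moreover obtain C where C: "l1_cost D n c = ereal C"
      using \<open>l1_cost D n c < ereal B\<close> l1_cost_nonneg[of D n c] by (cases "l1_cost D n c") auto
    ultimately have "C \<le> B" by simp
    have "(\<Sum>i<n. inner (r i) (\<psi> i)) \<le> C * sqrt S"
      by (rule sum_inner_le_l1_cost[OF rep C corr \<open>0 \<le> S\<close>])
    also have "\<dots> \<le> B * sqrt S"
      using \<open>C \<le> B\<close> \<open>0 \<le> S\<close> by (simp add: mult_right_mono)
    finally show ?thesis .
  qed
  show ?thesis
  proof (cases "S = 0")
    case True
    then show ?thesis using above[of "J + 1"] by simp
  next
    case False
    then have "0 < sqrt S" using \<open>0 \<le> S\<close> by simp
    have "(\<Sum>i<n. inner (r i) (\<psi> i)) / sqrt S \<le> J"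
      by (rule dense_ge) (use above \<open>0 < sqrt S\<close> in \<open>simp add: divide_le_eq\<close>)
    then show ?thesis using J \<open>0 < sqrt S\<close> by (simp add: divide_le_eq)
  qed
qed

lemma omp_residual_le_l1_dict_norm:
  assumes unit: "\<forall>v\<in>D. norm v = 1" and "D \<noteq> {}" and "l1_dict_norm D n \<phi> < \<infinity>"
  shows "omp_residual \<phi> n \<omega> m \<le> real_of_ereal (l1_dict_norm D n \<phi>)
           * sqrt (max_correlation D n (\<lambda>i. \<phi> i - proj_onto (omp_space \<omega> m) (\<phi> i)))"
proof -
  let ?r = "\<lambda>i. \<phi> i - proj_onto (omp_space \<omega> m) (\<phi> i)"
  have "omp_residual \<phi> n \<omega> m = (\<Sum>i<n. inner (?r i) (\<phi> i))"
    unfolding omp_residual_def omp_space_def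
    by (intro sum.cong refl power2_norm_sub_proj_onto_span) simp
  also have "\<dots> \<le> real_of_ereal (l1_dict_norm D n \<phi>) * sqrt (max_correlation D n ?r)"
    using assms max_correlation_upper[OF unit] max_correlation_nonneg[OF unit]
    by (intro sum_inner_le_l1_dict_norm) auto
  finally show ?thesis .
qed

lemma omp_residual_Suc_le:
  assumes omp: "collective_omp D \<kappa> n \<phi> \<omega>" and unit: "\<forall>v\<in>D. norm v = 1"
  shows "omp_residual \<phi> n \<omega> (Suc m) \<le> omp_residual \<phi> n \<omega> m
           - \<kappa>\<^sup>2 * max_correlation D n (\<lambda>i. \<phi> i - proj_onto (omp_space \<omega> m) (\<phi> i))"
proof -
  let ?r = "\<lambda>i. \<phi> i - proj_onto (omp_space \<omega> m) (\<phi> i)"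
  let ?w = "\<omega> (Suc m)"
  have "?w \<in> D" and select: "\<kappa>\<^sup>2 * max_correlation D n ?r \<le> (\<Sum>i<n. (inner (?r i) ?w)\<^sup>2)"
    using omp[unfolded collective_omp_def, rule_format, of "Suc m"]
    by (simp_all add: max_correlation_def)
  have space: "omp_space \<omega> (Suc m) = span (insert ?w (\<omega> ` {1..m}))"
    by (simp add: omp_space_def atLeastAtMostSuc_conv)
  have "omp_residual \<phi> n \<omega> (Suc m) \<le> (\<Sum>i<n. (norm (?r i))\<^sup>2 - (inner (?r i) ?w)\<^sup>2)"
    unfolding omp_residual_def space
    using unit \<open>?w \<in> D\<close> by (intro sum_mono) (simp add: omp_space_def proj_onto_span_insert_dist)
  also have "\<dots> = omp_residual \<phi> n \<omega> m - (\<Sum>i<n. (inner (?r i) ?w)\<^sup>2)"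
    by (simp add: omp_residual_def sum_subtractf)
  finally show ?thesis using select by linarith
qed

theorem theorem1:
  fixes D :: "'a::{real_inner, complete_space} set"
    and \<phi> :: "nat \<Rightarrow> 'a" and n :: nat and \<kappa> :: real and \<omega> :: "nat \<Rightarrow> 'a"
  assumes "dictionary D"
    and "\<forall>i<n. \<forall>j<n. inner (\<phi> i) (\<phi> j) = (if i = j then 1 else 0)"
    and "0 < \<kappa>" and "\<kappa> < 1"
    and "collective_omp D \<kappa> n \<phi> \<omega>"
    and "l1_dict_norm D n \<phi> < \<infinity>"
  shows "\<forall>m. omp_residual \<phi> n \<omega> m
           \<le> (real_of_ereal (l1_dict_norm D n \<phi>))\<^sup>2 / \<kappa>\<^sup>2 * inverse (real m + 1)"
proof
  fix m
  define J where "J = real_of_ereal (l1_dict_norm D n \<phi>)"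
  define R where "R k = omp_residual \<phi> n \<omega> k" for k
  define s where "s k = max_correlation D n (\<lambda>i. \<phi> i - proj_onto (omp_space \<omega> k) (\<phi> i))" for k
  have unit: "\<forall>v\<in>D. norm v = 1" using assms(1) by (simp add: dictionary_def)
  have "D \<noteq> {}" using assms(5) by (auto simp: collective_omp_def)
  have R_nonneg: "0 \<le> R k" for k by (simp add: R_def omp_residual_def sum_nonneg)
  have R_le: "R k \<le> J * sqrt (s k)" for k
    unfolding R_def J_def s_def using unit \<open>D \<noteq> {}\<close> assms(6) by (rule omp_residual_le_l1_dict_norm)
  have R_Suc: "R (Suc k) \<le> R k - \<kappa>\<^sup>2 * s k" for k
    unfolding R_def s_def using assms(5) unit by (rule omp_residual_Suc_le)
  show "omp_residual \<phi> n \<omega> m \<le> J\<^sup>2 / \<kappa>\<^sup>2 * inverse (real m + 1)"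
  proof (cases "J = 0")
    case True
    then show ?thesis using R_le[of m] R_nonneg[of m] by (simp add: R_def)
  next
    case False
    have "R (Suc k) \<le> R k - (R k)\<^sup>2 / (J\<^sup>2 / \<kappa>\<^sup>2)" for k
    proof -
      have "(R k)\<^sup>2 \<le> (J * sqrt (s k))\<^sup>2"
        using R_le[of k] R_nonneg[of k] by (intro power_mono) auto
      also have "\<dots> = J\<^sup>2 * s k"
        using max_correlation_nonneg[OF unit \<open>D \<noteq> {}\<close>] by (simp add: s_def power_mult_distrib)
      finally have "(R k)\<^sup>2 / (J\<^sup>2 / \<kappa>\<^sup>2) \<le> \<kappa>\<^sup>2 * s k"
        using False \<open>0 < \<kappa>\<close> by (simp add: field_simps)
      then show ?thesis using R_Suc[of k] by linarith
    qed
    then have "R m \<le> J\<^sup>2 / \<kappa>\<^sup>2 / (real m + 1)"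
      using False \<open>0 < \<kappa>\<close> R_nonneg by (intro quadratic_recurrence_bound) auto
    then show ?thesis by (simp add: R_def divide_inverse)
  qed
qed

end
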